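(* Let $V$ be a braided vector space of diagonal type over a field $F$ of characteristic zero with basis $x_1,\dots,x_n$ and braiding $C(x_i\otimes x_j)=p_{i,j}x_j\otimes x_i$, and let $\mathfrak B(V)$ be its Nichols algebra. (i) If there exist $i\ne j$ such that ($p_{i,j}\ne p_{j,i}^2$ or $p_{j,i}\ne p_{i,j}^2$) and $\operatorname{ord}(p_{i,i})\in\{1,\infty\}$, then $\dim\mathfrak L(V)_R=\infty$. (ii) If there exist $i\ne j$ such that ($p_{i,j}\ne1$ or $p_{j,i}\ne1$) and $\operatorname{ord}(p_{i,i})\in\{1,\infty\}$, then $\dim\mathfrak L(V)_L=\infty$.
   Context: $\mathfrak B(V)=T(V)/\bigoplus_{m\ge2}\ker S_m$, $\mathbb Z^n$-graded with $\deg x_i=e_i$; $p_{u,v}=\prod p_{i,j}^{a_ib_j}$ for $\deg u=\sum a_ie_i,\deg v=\sum b_je_j$. $\mathfrak L(V)_L$ (resp. $\mathfrak L(V)_R$) is the Lie subalgebra of $\mathfrak B(V)$ generated by $V$ under $[u,v]_L=p_{v,u}uv-p_{u,v}vu$ (resp. $[u,v]_R=p_{u,v}uv-p_{v,u}vu$). $\operatorname{ord}(q)$ is the multiplicative order of $q$ ($\infty$ if not a root of unity; $\operatorname{ord}(1)=1$). *)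

theory Defs
  imports Main "HOL-Combinatorics.Permutations" "HOL-Library.Extended_Nat" "HOL-Library.Function_Algebras"
begin

(* Tensor algebra T(V), V with basis x_0..x_{n-1}: finitely supported functions on words *)
type_synonym 'a tens = "nat list \<Rightarrow> 'a"

definition tscale :: "'a::times \<Rightarrow> 'a tens \<Rightarrow> 'a tens" where
  "tscale c u = (\<lambda>w. c * u w)"

abbreviation tspan :: "'a::field tens set \<Rightarrow> 'a tens set" where
  "tspan \<equiv> module.span tscale"

definition tensT :: "nat \<Rightarrow> ('a::zero) tens set" where
  "tensT n = {u. finite {w. u w \<noteq> 0} \<and> (\<forall>w. u w \<noteq> 0 \<longrightarrow> set w \<subseteq> {..<n})}"

definition tgen :: "nat \<Rightarrow> ('a::{zero,one}) tens" where
  "tgen i = (\<lambda>w. if w = [i] then 1 else 0)"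

definition tmult :: "('a::comm_semiring_1) tens \<Rightarrow> 'a tens \<Rightarrow> 'a tens" where
  "tmult u v = (\<lambda>w. \<Sum>k\<le>length w. u (take k w) * v (drop k w))"

definition tcomp :: "nat \<Rightarrow> ('a::zero) tens \<Rightarrow> 'a tens" where
  "tcomp m u = (\<lambda>w. if length w = m then u w else 0)"

(* quantum symmetrizer S_m = sum over sigma of T_sigma, for the braiding
   c(x_i \<otimes> x_j) = p i j x_j \<otimes> x_i ; output concentrated in degree m *)
definition qsym :: "(nat \<Rightarrow> nat \<Rightarrow> 'a::comm_ring_1) \<Rightarrow> nat \<Rightarrow> 'a tens \<Rightarrow> 'a tens" where
  "qsym p m u = (\<lambda>v. if length v = m then
      (\<Sum>\<tau> | \<tau> permutes {..<m}.
         (\<Prod>(a,b) \<in> {(a,b). b < a \<and> a < m \<and> \<tau> a < \<tau> b}. p (v ! \<tau> b) (v ! \<tau> a))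
         * u (map (\<lambda>j. v ! \<tau> j) [0..<m]))
      else 0)"

(* the ideal \<Oplus>_{m\<ge>2} ker S_m  (S_0, S_1 are identities) *)
definition nichols_ideal :: "nat \<Rightarrow> (nat \<Rightarrow> nat \<Rightarrow> 'a::comm_ring_1) \<Rightarrow> 'a tens set" where
  "nichols_ideal n p = {u \<in> tensT n. \<forall>m. qsym p m (tcomp m u) = 0}"

(* p_{u,v} for deg u = d, deg v = e (degrees as multiplicity vectors) *)
definition bichar :: "nat \<Rightarrow> (nat \<Rightarrow> nat \<Rightarrow> 'a::comm_monoid_mult) \<Rightarrow> (nat \<Rightarrow> nat) \<Rightarrow> (nat \<Rightarrow> nat) \<Rightarrow> 'a" where
  "bichar n p d e = (\<Prod>i<n. \<Prod>j<n. p i j ^ (d i * e j))"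

definition brL :: "nat \<Rightarrow> (nat \<Rightarrow> nat \<Rightarrow> 'a::comm_ring_1) \<Rightarrow> (nat \<Rightarrow> nat) \<Rightarrow> (nat \<Rightarrow> nat) \<Rightarrow> 'a tens \<Rightarrow> 'a tens \<Rightarrow> 'a tens" where
  "brL n p d e u v = (\<lambda>w. bichar n p e d * tmult u v w - bichar n p d e * tmult v u w)"

definition brR :: "nat \<Rightarrow> (nat \<Rightarrow> nat \<Rightarrow> 'a::comm_ring_1) \<Rightarrow> (nat \<Rightarrow> nat) \<Rightarrow> (nat \<Rightarrow> nat) \<Rightarrow> 'a tens \<Rightarrow> 'a tens \<Rightarrow> 'a tens" where
  "brR n p d e u v = (\<lambda>w. bichar n p d e * tmult u v w - bichar n p e d * tmult v u w)"

inductive_set lie_gen :: "nat \<Rightarrow> ((nat \<Rightarrow> nat) \<Rightarrow> (nat \<Rightarrow> nat) \<Rightarrow> 'a tens \<Rightarrow> 'a tens \<Rightarrow> 'a tens)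
    \<Rightarrow> ('a::{zero,one} tens \<times> (nat \<Rightarrow> nat)) set"
  for n br where
  gen: "i < n \<Longrightarrow> (tgen i, \<lambda>k. if k = i then 1 else 0) \<in> lie_gen n br"
| bra: "(u, d) \<in> lie_gen n br \<Longrightarrow> (v, e) \<in> lie_gen n br \<Longrightarrow>
        (br d e u v, \<lambda>k. d k + e k) \<in> lie_gen n br"

(* Lie subalgebra of B(V) generated by V, lifted to T(V) *)
definition lieL :: "nat \<Rightarrow> (nat \<Rightarrow> nat \<Rightarrow> 'a::field) \<Rightarrow> 'a tens set" where
  "lieL n p = tspan (fst ` lie_gen n (brL n p))"

definition lieR :: "nat \<Rightarrow> (nat \<Rightarrow> nat \<Rightarrow> 'a::field) \<Rightarrow> 'a tens set" where
  "lieR n p = tspan (fst ` lie_gen n (brR n p))"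

(* the image of L \<subseteq> T(V) in B(V) = T(V)/I is infinite-dimensional *)
definition nichols_infdim :: "nat \<Rightarrow> (nat \<Rightarrow> nat \<Rightarrow> 'a::field) \<Rightarrow> 'a tens set \<Rightarrow> bool" where
  "nichols_infdim n p L \<longleftrightarrow>
     \<not> (\<exists>B. finite B \<and> B \<subseteq> tensT n \<and>
          L \<subseteq> {(\<lambda>w. b w + i w) | b i. b \<in> tspan B \<and> i \<in> nichols_ideal n p})"

definition qord :: "'a::monoid_mult \<Rightarrow> enat" where
  "qord q = (if \<exists>k>0. q ^ k = 1 then enat (LEAST k. k > 0 \<and> q ^ k = 1) else \<infinity>)"

end

theory Submission
  imports Defs
begin

text \<open>For \<open>i \<noteq> j\<close> consider the iterated brackets
  \<open>y\<^sub>m = [x\<^sub>i, [x\<^sub>i, \<dots>, [x\<^sub>i, x\<^sub>j]\<dots>]]\<close> (\<open>m\<close> brackets) in \<open>L(V)\<close>. At the words \<open>x\<^sub>i\<^sup>m x\<^sub>j\<close>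
  and \<open>x\<^sub>j x\<^sub>i\<^sup>m\<close>, the quantum symmetriser \<open>S\<^sub>m\<^sub>+\<^sub>1 y\<close> of a tensor \<open>y\<close> is the quantum
  factorial \<open>[m]\<^sub>q!\<close>, \<open>q = p\<^sub>i\<^sub>i\<close>, times an explicit linear functional of \<open>y\<close>; and
  \<open>[m]\<^sub>q! \<noteq> 0\<close> because \<open>q\<close> is \<open>1\<close> or not a root of unity and the characteristic is zero.
  Bracketing with \<open>x\<^sub>i\<close> multiplies the two functionals by \<open>q\<^sup>m (p\<^sub>i\<^sub>j - p\<^sub>j\<^sub>i\<^sup>2)\<close>, resp.
  \<open>q\<^sup>m (p\<^sub>i\<^sub>j\<^sup>2 - p\<^sub>j\<^sub>i)\<close> for \<open>[-,-]\<^sub>R\<close>, and by \<open>q\<^sup>m p\<^sub>j\<^sub>i (1 - p\<^sub>i\<^sub>j)\<close>, resp. \<open>q\<^sup>m p\<^sub>i\<^sub>j (p\<^sub>j\<^sub>i - 1)\<close>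
  for \<open>[-,-]\<^sub>L\<close>. Under the hypotheses one of these factors never vanishes, so
  \<open>S\<^sub>m\<^sub>+\<^sub>1 y\<^sub>m \<noteq> 0\<close> for every \<open>m\<close>: the Lie algebra has elements of unbounded degree that
  survive in \<open>B(V)\<close>.\<close>

section \<open>Infinite dimension modulo the Nichols ideal\<close>

lemma module_tscale: "module (tscale :: 'a::field \<Rightarrow> 'a tens \<Rightarrow> 'a tens)"
  by unfold_locales (auto simp: tscale_def fun_eq_iff algebra_simps)

lemma tspan_vanishes_above:
  fixes B :: "'a::field tens set"
  assumes "b \<in> tspan B" and "\<And>a w. a \<in> B \<Longrightarrow> N < length w \<Longrightarrow> a w = 0"
    and "N < length w"
  shows "b w = 0"
proof -
  have "\<forall>w. N < length w \<longrightarrow> b w = 0"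
    by (rule module.span_induct_alt[OF module_tscale assms(1)])
      (use assms(2) in \<open>auto simp: tscale_def\<close>)
  with assms(3) show ?thesis by blast
qed

lemma qsym_cong:
  assumes "\<And>w. length w = m \<Longrightarrow> f w = g w"
  shows "qsym p m f v = qsym p m g v"
  unfolding qsym_def using assms by (auto intro!: sum.cong)

text \<open>A finite set \<open>B\<close> only involves words of bounded length, and \<open>S\<^sub>m\<close> kills
  the degree \<open>m\<close> part of the Nichols ideal; so if \<open>S\<^sub>m\<close> does not vanish on \<open>L\<close> for
  arbitrarily large \<open>m\<close>, no finite \<open>B\<close> spans \<open>L\<close> modulo the ideal.\<close>

lemma nichols_infdimI:
  fixes p :: "nat \<Rightarrow> nat \<Rightarrow> 'a::field"
  assumes "\<And>N. \<exists>u\<in>L. \<exists>m>N. \<exists>v. qsym p m u v \<noteq> 0"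
  shows "nichols_infdim n p L"
  unfolding nichols_infdim_def
proof
  assume "\<exists>B. finite B \<and> B \<subseteq> tensT n \<and>
    L \<subseteq> {(\<lambda>w. b w + i w) | b i. b \<in> tspan B \<and> i \<in> nichols_ideal n p}"
  then obtain B where B: "finite B" "B \<subseteq> tensT n"
    and L: "L \<subseteq> {(\<lambda>w. b w + i w) | b i. b \<in> tspan B \<and> i \<in> nichols_ideal n p}"
    by blast
  have "finite (\<Union>a\<in>B. {w. a w \<noteq> 0})"
    using B by (auto simp: tensT_def)
  then obtain N where N: "\<And>a w. a \<in> B \<Longrightarrow> a w \<noteq> 0 \<Longrightarrow> length w \<le> N"
    using finite_nat_set_iff_bounded_le[of "length ` (\<Union>a\<in>B. {w. a w \<noteq> 0})"] by auto
  obtain u m v where "u \<in> L" "N < m" and nonzero: "qsym p m u v \<noteq> 0"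
    using assms by blast
  then obtain b i where u: "u = (\<lambda>w. b w + i w)" and "b \<in> tspan B" "i \<in> nichols_ideal n p"
    using L by blast
  have "qsym p m u v = qsym p m (tcomp m i) v"
  proof (rule qsym_cong)
    fix w :: "nat list" assume "length w = m"
    then have "b w = 0"
      using tspan_vanishes_above[OF \<open>b \<in> tspan B\<close>, of N] N \<open>N < m\<close> by fastforce
    then show "u w = tcomp m i w" using \<open>length w = m\<close> by (simp add: u tcomp_def)
  qed
  also have "\<dots> = 0"
    using \<open>i \<in> nichols_ideal n p\<close> by (simp add: nichols_ideal_def)
  finally show False using nonzero by simp
qed

section \<open>The quantum symmetriser\<close>

definition inversions :: "nat \<Rightarrow> (nat \<Rightarrow> nat) \<Rightarrow> (nat \<times> nat) set" where
  "inversions m \<tau> = {(a, b). b < a \<and> a < m \<and> \<tau> a < \<tau> b}"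

lemma finite_inversions [simp]: "finite (inversions m \<tau>)"
  by (rule finite_subset[of _ "{..<m} \<times> {..<m}"]) (auto simp: inversions_def)

lemma qsym_eq:
  assumes "length v = m"
  shows "qsym p m u v = (\<Sum>\<tau> | \<tau> permutes {..<m}.
    (\<Prod>(a, b)\<in>inversions m \<tau>. p (v ! \<tau> b) (v ! \<tau> a)) * u (permute_list \<tau> v))"
  using assms by (simp add: qsym_def inversions_def permute_list_def)

text \<open>\<open>perm_insert m r s\<close> sends position \<open>r\<close> to \<open>m\<close> and the other positions, in
  order, to \<open>s 0, \<dots>, s (m - 1)\<close>; every permutation of \<open>{..<Suc m}\<close> arises in this way
  from exactly one \<open>r \<le> m\<close> and one \<open>s\<close>, which \<open>perm_delete\<close> recovers.\<close>

definition skip :: "nat \<Rightarrow> nat \<Rightarrow> nat" where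
  "skip r a = (if a < r then a else Suc a)"

definition perm_insert :: "nat \<Rightarrow> nat \<Rightarrow> (nat \<Rightarrow> nat) \<Rightarrow> nat \<Rightarrow> nat" where
  "perm_insert m r s a =
    (if a < r then s a else if a = r then m else if a \<le> m then s (a - 1) else a)"

definition perm_delete :: "nat \<Rightarrow> nat \<Rightarrow> (nat \<Rightarrow> nat) \<Rightarrow> nat \<Rightarrow> nat" where
  "perm_delete m r \<sigma> a = (if a < m then \<sigma> (skip r a) else a)"

lemma skip_less_skip_iff [simp]: "skip r a < skip r b \<longleftrightarrow> a < b"
  by (auto simp: skip_def)

lemma skip_neq [simp]: "skip r a \<noteq> r"
  by (simp add: skip_def)

lemma skip_less_Suc_iff [simp]: "skip r a < Suc m \<longleftrightarrow> a < m \<or> (a = m \<and> m < r)"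
  by (auto simp: skip_def)

lemma inj_skip: "inj (skip r)"
  by (auto simp: inj_def skip_def split: if_splits)

lemma skip_surj:
  assumes "a < Suc m" "r \<le> m" "a \<noteq> r"
  shows "\<exists>a'<m. a = skip r a'"
proof (cases "a < r")
  case True then show ?thesis using assms by (auto simp: skip_def)
next
  case False then show ?thesis using assms by (intro exI[of _ "a - 1"]) (auto simp: skip_def)
qed

lemma perm_insert_skip [simp]: "a < m \<Longrightarrow> perm_insert m r s (skip r a) = s a"
  by (simp add: perm_insert_def skip_def)

lemma perm_insert_at [simp]: "perm_insert m r s r = m"
  by (simp add: perm_insert_def)

lemma perm_insert_permutes:
  assumes s: "s permutes {..<m}" and "r \<le> m"
  shows "perm_insert m r s permutes {..<Suc m}"
proof (rule bij_imp_permutes)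
  let ?\<sigma> = "perm_insert m r s"
  have s_lt: "s a < m" if "a < m" for a
    using permutes_in_image[OF s] that by simp
  have at_r: "?\<sigma> a = m \<longleftrightarrow> a = r" if a: "a < Suc m" for a
  proof (cases "a = r")
    case False
    then obtain a' where "a' < m" "a = skip r a'" using skip_surj[OF a \<open>r \<le> m\<close>] by blast
    then show ?thesis using s_lt[of a'] False by simp
  qed simp
  have "inj_on ?\<sigma> {..<Suc m}"
  proof (rule inj_onI)
    fix a b assume a: "a \<in> {..<Suc m}" and b: "b \<in> {..<Suc m}" and eq: "?\<sigma> a = ?\<sigma> b"
    show "a = b"
    proof (cases "a = r")
      case False
      then have "b \<noteq> r" using at_r a b eq by auto
      obtain a' b' where ab: "a' < m" "a = skip r a'" "b' < m" "b = skip r b'"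
        using skip_surj a b \<open>a \<noteq> r\<close> \<open>b \<noteq> r\<close> \<open>r \<le> m\<close> by (metis lessThan_iff)
      then have "s a' = s b'" using eq by simp
      then show ?thesis using ab permutes_inj[OF s] by (simp add: inj_eq)
    qed (use at_r[of b] b eq in simp)
  qed
  moreover have "?\<sigma> ` {..<Suc m} \<subseteq> {..<Suc m}"
  proof
    fix b assume "b \<in> ?\<sigma> ` {..<Suc m}"
    then obtain a where a: "a < Suc m" and b: "b = ?\<sigma> a" by auto
    show "b \<in> {..<Suc m}"
    proof (cases "a = r")
      case False
      then obtain a' where "a' < m" "a = skip r a'" using skip_surj[OF a \<open>r \<le> m\<close>] by blast
      then show ?thesis using b s_lt[of a'] by simp
    qed (use b in simp)
  qed
  ultimately show "bij_betw ?\<sigma> {..<Suc m} {..<Suc m}"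
    by (intro bij_betw_imageI endo_inj_surj) auto
  show "?\<sigma> x = x" if "x \<notin> {..<Suc m}" for x
    using that \<open>r \<le> m\<close> by (simp add: perm_insert_def)
qed

lemma perm_delete_permutes:
  assumes \<sigma>: "\<sigma> permutes {..<Suc m}" and "\<sigma> r = m"
  shows "perm_delete m r \<sigma> permutes {..<m}"
proof (rule bij_imp_permutes)
  let ?s = "perm_delete m r \<sigma>"
  have \<sigma>_eq_iff: "\<sigma> a = \<sigma> b \<longleftrightarrow> a = b" for a b
    using permutes_inj[OF \<sigma>] by (simp add: inj_eq)
  have "?s a < m" if "a < m" for a
  proof -
    have "\<sigma> (skip r a) \<noteq> m" using \<sigma>_eq_iff[of "skip r a" r] \<open>\<sigma> r = m\<close> by simp
    moreover have "\<sigma> (skip r a) < Suc m" using permutes_in_image[OF \<sigma>] that by simp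
    ultimately show ?thesis using that by (simp add: perm_delete_def)
  qed
  then have "?s ` {..<m} \<subseteq> {..<m}" by auto
  moreover have "inj_on ?s {..<m}"
    by (rule inj_onI) (simp add: perm_delete_def \<sigma>_eq_iff inj_eq[OF inj_skip])
  ultimately show "bij_betw ?s {..<m} {..<m}"
    by (intro bij_betw_imageI endo_inj_surj) auto
  show "?s x = x" if "x \<notin> {..<m}" for x
    using that by (simp add: perm_delete_def)
qed

lemma perm_insert_delete:
  assumes "\<sigma> permutes {..<Suc m}" "\<sigma> r = m" "r \<le> m"
  shows "perm_insert m r (perm_delete m r \<sigma>) = \<sigma>"
proof
  fix a
  consider "a < r" | "a = r" | "r < a" "a \<le> m" | "m < a" by linarith
  then show "perm_insert m r (perm_delete m r \<sigma>) a = \<sigma> a"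
    by cases (use assms permutes_not_in[OF assms(1), of a] in
      \<open>auto simp: perm_insert_def perm_delete_def skip_def\<close>)
qed

lemma perm_delete_insert:
  assumes "s permutes {..<m}"
  shows "perm_delete m r (perm_insert m r s) = s"
proof
  fix a show "perm_delete m r (perm_insert m r s) a = s a"
    using permutes_not_in[OF assms, of a] by (simp add: perm_delete_def)
qed

lemma permute_list_perm_insert:
  assumes s: "s permutes {..<m}" and "r \<le> m" and "length vs = m"
  shows "permute_list (perm_insert m r s) (vs @ [x])
    = take r (permute_list s vs) @ x # drop r (permute_list s vs)"
proof (rule nth_equalityI)
  let ?W = "permute_list s vs"
  have W: "?W ! c = vs ! s c" if "c < m" for c
    using permute_list_nth[of s vs c] s that assms by simp
  have s_lt: "s a < m" if "a < m" for a
    using permutes_in_image[OF s] that by simp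
  fix k assume "k < length (permute_list (perm_insert m r s) (vs @ [x]))"
  then have "k < Suc m" using assms by simp
  then have lhs: "permute_list (perm_insert m r s) (vs @ [x]) ! k = (vs @ [x]) ! perm_insert m r s k"
    using perm_insert_permutes[OF s \<open>r \<le> m\<close>] assms by (intro permute_list_nth) simp_all
  consider "k < r" | "k = r" | "r < k" by linarith
  then show "permute_list (perm_insert m r s) (vs @ [x]) ! k = (take r ?W @ x # drop r ?W) ! k"
  proof cases
    case 1
    then show ?thesis using assms s_lt W by (simp add: lhs perm_insert_def nth_append)
  next
    case 2
    then show ?thesis using lhs assms by (simp add: nth_append)
  next
    case 3
    then have "(take r ?W @ x # drop r ?W) ! k = ?W ! (k - 1)"
      using assms \<open>k < Suc m\<close> by (simp add: nth_append)
    then show ?thesis using 3 assms s_lt W \<open>k < Suc m\<close> by (simp add: lhs perm_insert_def nth_append)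
  qed
qed (use assms in simp)

lemma inversions_perm_insert:
  assumes s: "s permutes {..<m}" and "r \<le> m"
  shows "inversions (Suc m) (perm_insert m r s)
    = (\<lambda>c. (Suc c, r)) ` {r..<m} \<union> map_prod (skip r) (skip r) ` inversions m s"
    (is "inversions (Suc m) ?\<sigma> = ?A \<union> ?B")
proof
  have s_lt: "s a < m" if "a < m" for a
    using permutes_in_image[OF s] that by simp
  show "?A \<union> ?B \<subseteq> inversions (Suc m) ?\<sigma>"
  proof
    fix z assume "z \<in> ?A \<union> ?B"
    then show "z \<in> inversions (Suc m) ?\<sigma>"
    proof
      assume "z \<in> ?A"
      then obtain c where c: "z = (Suc c, r)" "r \<le> c" "c < m" by auto
      moreover have "?\<sigma> (Suc c) = s c"
        using perm_insert_skip[of c m r s] c by (simp add: skip_def)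
      ultimately show ?thesis using s_lt[of c] by (simp add: inversions_def)
    next
      assume "z \<in> ?B"
      then obtain a b where "z = (skip r a, skip r b)" "(a, b) \<in> inversions m s" by auto
      then show ?thesis by (auto simp: inversions_def)
    qed
  qed
  show "inversions (Suc m) ?\<sigma> \<subseteq> ?A \<union> ?B"
  proof
    fix z assume "z \<in> inversions (Suc m) ?\<sigma>"
    then obtain a b where z: "z = (a, b)" "b < a" "a < Suc m" "?\<sigma> a < ?\<sigma> b"
      by (auto simp: inversions_def)
    have "?\<sigma> b < Suc m"
      using permutes_in_image[OF perm_insert_permutes[OF s \<open>r \<le> m\<close>]] z by simp
    then have "a \<noteq> r" using z by auto
    then obtain a' where a': "a' < m" "a = skip r a'" using skip_surj z \<open>r \<le> m\<close> by blast
    show "z \<in> ?A \<union> ?B"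
    proof (cases "b = r")
      case True
      then have "z = (Suc a', r)" "a' \<in> {r..<m}"
        using z a' by (auto simp: skip_def split: if_splits)
      then show ?thesis by blast
    next
      case False
      then obtain b' where b': "b' < m" "b = skip r b'"
        using skip_surj[of b m r] z \<open>r \<le> m\<close> by auto
      then have "(a', b') \<in> inversions m s" using z a' by (simp add: inversions_def)
      moreover have "z = map_prod (skip r) (skip r) (a', b')" using z a' b' by simp
      ultimately show ?thesis by blast
    qed
  qed
qed

lemma prod_inversions_perm_insert:
  assumes s: "s permutes {..<m}" and "r \<le> m" and "length vs = m"
  shows "(\<Prod>(a, b)\<in>inversions (Suc m) (perm_insert m r s).
      f ((vs @ [x]) ! perm_insert m r s b) ((vs @ [x]) ! perm_insert m r s a))
    = (\<Prod>c\<in>{r..<m}. f x (vs ! s c)) * (\<Prod>(a, b)\<in>inversions m s. f (vs ! s b) (vs ! s a))"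
proof -
  define T where "T = (\<lambda>(a, b). f ((vs @ [x]) ! perm_insert m r s b) ((vs @ [x]) ! perm_insert m r s a))"
  have s_lt: "s a < m" if "a < m" for a
    using permutes_in_image[OF s] that by simp
  have "prod T ((\<lambda>c. (Suc c, r)) ` {r..<m}) = prod (T \<circ> (\<lambda>c. (Suc c, r))) {r..<m}"
    by (rule prod.reindex) (simp add: inj_on_def)
  also have "\<dots> = (\<Prod>c\<in>{r..<m}. f x (vs ! s c))"
  proof (rule prod.cong)
    fix c assume c: "c \<in> {r..<m}"
    then have "perm_insert m r s (Suc c) = s c"
      using perm_insert_skip[of c m r s] by (simp add: skip_def)
    then show "(T \<circ> (\<lambda>c. (Suc c, r))) c = f x (vs ! s c)"
      using c s_lt[of c] \<open>length vs = m\<close> by (simp add: T_def nth_append)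
  qed simp
  finally have A: "prod T ((\<lambda>c. (Suc c, r)) ` {r..<m}) = (\<Prod>c\<in>{r..<m}. f x (vs ! s c))" .
  have "prod T (map_prod (skip r) (skip r) ` inversions m s)
      = prod (T \<circ> map_prod (skip r) (skip r)) (inversions m s)"
    by (rule prod.reindex) (rule inj_on_subset[OF prod.inj_map[OF inj_skip inj_skip] subset_UNIV])
  also have "\<dots> = (\<Prod>(a, b)\<in>inversions m s. f (vs ! s b) (vs ! s a))"
  proof (rule prod.cong)
    fix z assume "z \<in> inversions m s"
    then obtain a b where "z = (a, b)" "b < m" "a < m" by (auto simp: inversions_def)
    then show "(T \<circ> map_prod (skip r) (skip r)) z = (case z of (a, b) \<Rightarrow> f (vs ! s b) (vs ! s a))"
      using s_lt[of a] s_lt[of b] \<open>length vs = m\<close> by (simp add: T_def nth_append)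
  qed simp
  finally have B: "prod T (map_prod (skip r) (skip r) ` inversions m s)
      = (\<Prod>(a, b)\<in>inversions m s. f (vs ! s b) (vs ! s a))" .
  have "prod T (inversions (Suc m) (perm_insert m r s))
      = prod T ((\<lambda>c. (Suc c, r)) ` {r..<m}) * prod T (map_prod (skip r) (skip r) ` inversions m s)"
    unfolding inversions_perm_insert[OF s \<open>r \<le> m\<close>] by (rule prod.union_disjoint) auto
  then show ?thesis using A B by (simp add: T_def)
qed

lemma bij_betw_perm_insert:
  "bij_betw (\<lambda>(r, s). perm_insert m r s)
    ({..m} \<times> {s. s permutes {..<m}}) {\<sigma>. \<sigma> permutes {..<Suc m}}"
proof (rule bij_betw_byWitness[where f' = "\<lambda>\<sigma>. (inv \<sigma> m, perm_delete m (inv \<sigma> m) \<sigma>)"])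
  have inv_facts: "\<sigma> (inv \<sigma> m) = m" "inv \<sigma> m \<le> m" if "\<sigma> permutes {..<Suc m}" for \<sigma>
    using permutes_inverses(1)[OF that] permutes_in_image[OF permutes_inv[OF that], of m] by auto
  have inv_insert: "inv (perm_insert m r s) m = r" if "r \<le> m" "s permutes {..<m}" for r s
    using permutes_inverses(2)[OF perm_insert_permutes[OF that(2,1)], of r] by simp
  show "\<forall>z\<in>{..m} \<times> {s. s permutes {..<m}}.
      (\<lambda>\<sigma>. (inv \<sigma> m, perm_delete m (inv \<sigma> m) \<sigma>)) ((\<lambda>(r, s). perm_insert m r s) z) = z"
    by (auto simp: inv_insert perm_delete_insert)
  show "\<forall>\<sigma>\<in>{\<sigma>. \<sigma> permutes {..<Suc m}}.
      (\<lambda>(r, s). perm_insert m r s) ((\<lambda>\<sigma>. (inv \<sigma> m, perm_delete m (inv \<sigma> m) \<sigma>)) \<sigma>) = \<sigma>"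
    by (auto simp: inv_facts perm_insert_delete)
  show "(\<lambda>(r, s). perm_insert m r s) ` ({..m} \<times> {s. s permutes {..<m}})
      \<subseteq> {\<sigma>. \<sigma> permutes {..<Suc m}}"
    by (auto intro: perm_insert_permutes)
  show "(\<lambda>\<sigma>. (inv \<sigma> m, perm_delete m (inv \<sigma> m) \<sigma>)) ` {\<sigma>. \<sigma> permutes {..<Suc m}}
      \<subseteq> {..m} \<times> {s. s permutes {..<m}}"
    by (auto simp: inv_facts intro: perm_delete_permutes)
qed

text \<open>Sorting the permutations of \<open>{..<Suc m}\<close> by the position \<open>r\<close> that receives the last
  letter \<open>x\<close>: the letters that \<open>x\<close> passes contribute the braiding factors \<open>p x _\<close>.\<close>

lemma qsym_snoc:
  assumes "length vs = m"
  shows "qsym p (Suc m) u (vs @ [x]) =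
    (\<Sum>r\<le>m. qsym p m (\<lambda>w. (\<Prod>c\<in>{r..<m}. p x (w ! c)) * u (take r w @ x # drop r w)) vs)"
proof -
  define F where "F = (\<lambda>\<sigma>. (\<Prod>(a, b)\<in>inversions (Suc m) \<sigma>. p ((vs @ [x]) ! \<sigma> b) ((vs @ [x]) ! \<sigma> a))
    * u (permute_list \<sigma> (vs @ [x])))"
  define G where "G = (\<lambda>r s. (\<Prod>(a, b)\<in>inversions m s. p (vs ! s b) (vs ! s a))
    * ((\<Prod>c\<in>{r..<m}. p x (permute_list s vs ! c))
       * u (take r (permute_list s vs) @ x # drop r (permute_list s vs))))"
  have "qsym p (Suc m) u (vs @ [x]) = (\<Sum>\<sigma> | \<sigma> permutes {..<Suc m}. F \<sigma>)"
    using assms by (simp add: qsym_eq F_def)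
  also have "\<dots> = (\<Sum>z\<in>{..m} \<times> {s. s permutes {..<m}}. F ((\<lambda>(r, s). perm_insert m r s) z))"
    by (rule sum.reindex_bij_betw[OF bij_betw_perm_insert, symmetric])
  also have "\<dots> = (\<Sum>(r, s)\<in>{..m} \<times> {s. s permutes {..<m}}. G r s)"
  proof (rule sum.cong)
    fix z assume "z \<in> {..m} \<times> {s. s permutes {..<m}}"
    then obtain r s where z: "z = (r, s)" "r \<le> m" and s: "s permutes {..<m}" by auto
    have "(\<Prod>c\<in>{r..<m}. p x (permute_list s vs ! c)) = (\<Prod>c\<in>{r..<m}. p x (vs ! s c))"
      using s assms by (intro prod.cong) (simp_all add: permute_list_nth)
    then show "F ((\<lambda>(r, s). perm_insert m r s) z) = (case z of (r, s) \<Rightarrow> G r s)"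
      using z s assms
      by (simp add: F_def G_def prod_inversions_perm_insert permute_list_perm_insert algebra_simps)
  qed simp
  also have "\<dots> = (\<Sum>r\<le>m. qsym p m (\<lambda>w. (\<Prod>c\<in>{r..<m}. p x (w ! c)) * u (take r w @ x # drop r w)) vs)"
    using assms by (simp add: qsym_eq G_def sum.cartesian_product)
  finally show ?thesis .
qed

definition reflect :: "nat \<Rightarrow> nat \<Rightarrow> nat" where
  "reflect m a = (if a < m then m - 1 - a else a)"

lemma reflect_reflect [simp]: "reflect m (reflect m a) = a"
  by (simp add: reflect_def)

lemma reflect_less_iff [simp]: "reflect m a < m \<longleftrightarrow> a < m"
  by (simp add: reflect_def)

lemma reflect_less_reflect_iff:
  "a < m \<Longrightarrow> b < m \<Longrightarrow> reflect m a < reflect m b \<longleftrightarrow> b < a"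
  by (auto simp: reflect_def)

lemma rev_nth_reflect: "a < length v \<Longrightarrow> rev v ! a = v ! reflect (length v) a"
  by (simp add: rev_nth reflect_def)

lemma reflect_conj_permutes:
  assumes "\<tau> permutes {..<m}"
  shows "reflect m \<circ> \<tau> \<circ> reflect m permutes {..<m}"
proof -
  have "reflect m permutes {..<m}"
    by (rule inj_imp_permutes) (auto simp: reflect_def inj_on_def)
  then show ?thesis using assms by (simp add: permutes_compose)
qed

lemma bij_betw_reflect_conj:
  "bij_betw (\<lambda>\<tau>. reflect m \<circ> \<tau> \<circ> reflect m) {\<tau>. \<tau> permutes {..<m}} {\<tau>. \<tau> permutes {..<m}}"
  by (rule bij_betw_byWitness[where f' = "\<lambda>\<tau>. reflect m \<circ> \<tau> \<circ> reflect m"])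
    (auto simp: fun_eq_iff reflect_conj_permutes)

lemma permute_list_rev:
  assumes "\<tau> permutes {..<length v}"
  shows "permute_list \<tau> (rev v) = rev (permute_list (reflect (length v) \<circ> \<tau> \<circ> reflect (length v)) v)"
proof (rule nth_equalityI)
  fix k assume "k < length (permute_list \<tau> (rev v))"
  then have "k < length v" by simp
  moreover have "\<tau> k < length v" using permutes_in_image[OF assms] \<open>k < length v\<close> by simp
  ultimately show "permute_list \<tau> (rev v) ! k
      = rev (permute_list (reflect (length v) \<circ> \<tau> \<circ> reflect (length v)) v) ! k"
    using assms reflect_conj_permutes[OF assms]
    by (simp add: permute_list_nth rev_nth_reflect)
qed simp

lemma inversions_reflect_conj:
  assumes "\<tau> permutes {..<m}"
  shows "inversions m (reflect m \<circ> \<tau> \<circ> reflect m)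
    = (\<lambda>(a, b). (reflect m b, reflect m a)) ` inversions m \<tau>"
proof -
  have \<tau>_lt: "\<tau> a < m" if "a < m" for a using permutes_in_image[OF assms] that by simp
  have iff: "(a, b) \<in> inversions m (reflect m \<circ> \<tau> \<circ> reflect m)
      \<longleftrightarrow> (reflect m b, reflect m a) \<in> inversions m \<tau>" for a b
  proof (cases "a < m \<and> b < m")
    case True
    then show ?thesis
      using \<tau>_lt[of "reflect m a"] \<tau>_lt[of "reflect m b"]
      by (auto simp: inversions_def reflect_less_reflect_iff)
  next
    case False
    then show ?thesis by (auto simp: inversions_def reflect_def)
  qed
  show ?thesis
  proof (rule set_eqI)
    fix z :: "nat \<times> nat"
    obtain a b where z: "z = (a, b)" by fastforce
    have "z \<in> (\<lambda>(a, b). (reflect m b, reflect m a)) ` inversions m \<tau>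
        \<longleftrightarrow> (reflect m b, reflect m a) \<in> inversions m \<tau>"
      unfolding z by (rule iffI) (force, metis (mono_tags, lifting) case_prod_conv image_iff reflect_reflect)
    then show "z \<in> inversions m (reflect m \<circ> \<tau> \<circ> reflect m)
        \<longleftrightarrow> z \<in> (\<lambda>(a, b). (reflect m b, reflect m a)) ` inversions m \<tau>"
      using iff z by simp
  qed
qed

lemma qsym_rev:
  assumes "length v = m"
  shows "qsym p m u (rev v) = qsym (\<lambda>a b. p b a) m (\<lambda>w. u (rev w)) v"
proof -
  define H where "H = (\<lambda>\<tau>. (\<Prod>(a, b)\<in>inversions m \<tau>. p (v ! \<tau> a) (v ! \<tau> b))
    * u (rev (permute_list \<tau> v)))"
  have "qsym (\<lambda>a b. p b a) m (\<lambda>w. u (rev w)) v = (\<Sum>\<tau> | \<tau> permutes {..<m}. H \<tau>)"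
    using assms by (simp add: qsym_eq H_def)
  also have "\<dots> = (\<Sum>\<tau> | \<tau> permutes {..<m}. H (reflect m \<circ> \<tau> \<circ> reflect m))"
    by (rule sum.reindex_bij_betw[OF bij_betw_reflect_conj, symmetric])
  also have "\<dots> = qsym p m u (rev v)"
    unfolding qsym_eq[of "rev v" m, OF length_rev[of v, unfolded assms]]
  proof (rule sum.cong)
    fix \<tau> assume "\<tau> \<in> {\<tau>. \<tau> permutes {..<m}}"
    then have \<tau>: "\<tau> permutes {..<m}" by simp
    have \<tau>_lt: "\<tau> a < m" if "a < m" for a using permutes_in_image[OF \<tau>] that by simp
    have inj: "inj_on (\<lambda>(a, b). (reflect m b, reflect m a)) X" for X
      by (rule inj_on_inverseI[where g = "\<lambda>(a, b). (reflect m b, reflect m a)"]) auto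
    have "(\<Prod>(a, b)\<in>inversions m (reflect m \<circ> \<tau> \<circ> reflect m).
        p (v ! (reflect m \<circ> \<tau> \<circ> reflect m) a) (v ! (reflect m \<circ> \<tau> \<circ> reflect m) b))
      = (\<Prod>(a, b)\<in>inversions m \<tau>. p (rev v ! \<tau> b) (rev v ! \<tau> a))"
      unfolding inversions_reflect_conj[OF \<tau>] prod.reindex[OF inj]
      using \<tau>_lt assms by (intro prod.cong) (auto simp: inversions_def rev_nth_reflect)
    moreover have "rev (permute_list (reflect m \<circ> \<tau> \<circ> reflect m) v) = permute_list \<tau> (rev v)"
      using permute_list_rev[of \<tau> v] \<tau> assms by simp
    ultimately show "H (reflect m \<circ> \<tau> \<circ> reflect m)
      = (\<Prod>(a, b)\<in>inversions m \<tau>. p (rev v ! \<tau> b) (rev v ! \<tau> a)) * u (permute_list \<tau> (rev v))"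
      by (simp add: H_def)
  qed simp
  finally show ?thesis by simp
qed

section \<open>Symmetrising the words \<open>x\<^sub>i\<^sup>m x\<^sub>j\<close> and \<open>x\<^sub>j x\<^sub>i\<^sup>m\<close>\<close>

definition qfact :: "'a::comm_semiring_1 \<Rightarrow> nat \<Rightarrow> 'a" where
  "qfact q m = (\<Prod>k<m. \<Sum>r\<le>k. q ^ r)"

lemma sum_power_diff_atMost: "(\<Sum>r\<le>m. (q::'a::comm_semiring_1) ^ (m - r)) = (\<Sum>r\<le>m. q ^ r)"
  by (rule sum.reindex_bij_witness[where i = "\<lambda>r. m - r" and j = "\<lambda>r. m - r"]) auto

text \<open>Up to the factor \<open>qfact (p i i) m\<close>, these functionals are \<open>S\<^sub>m\<^sub>+\<^sub>1\<close> evaluated at the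
  words \<open>x\<^sub>i\<^sup>m x\<^sub>j\<close> and \<open>x\<^sub>j x\<^sub>i\<^sup>m\<close> (lemmas \<open>qsym_replicate_snoc\<close> and \<open>qsym_Cons_replicate\<close>).\<close>

definition phi_snoc :: "(nat \<Rightarrow> nat \<Rightarrow> 'a::comm_ring_1) \<Rightarrow> nat \<Rightarrow> nat \<Rightarrow> nat \<Rightarrow> 'a tens \<Rightarrow> 'a" where
  "phi_snoc p i j m y = (\<Sum>r\<le>m. p j i ^ (m - r) * y (replicate r i @ j # replicate (m - r) i))"

definition phi_cons :: "(nat \<Rightarrow> nat \<Rightarrow> 'a::comm_ring_1) \<Rightarrow> nat \<Rightarrow> nat \<Rightarrow> nat \<Rightarrow> 'a tens \<Rightarrow> 'a" where
  "phi_cons p i j m y = (\<Sum>r\<le>m. p i j ^ r * y (replicate r i @ j # replicate (m - r) i))"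

lemma phi_snoc_tgen: "phi_snoc p i j 0 (tgen j) = 1"
  by (simp add: phi_snoc_def tgen_def)

lemma phi_cons_tgen: "phi_cons p i j 0 (tgen j) = 1"
  by (simp add: phi_cons_def tgen_def)

lemma phi_snoc_lincomb:
  "phi_snoc p i j m (\<lambda>w. a * f w - b * g w) = a * phi_snoc p i j m f - b * phi_snoc p i j m g"
  unfolding phi_snoc_def by (simp add: sum_subtractf sum_distrib_left algebra_simps)

lemma phi_cons_lincomb:
  "phi_cons p i j m (\<lambda>w. a * f w - b * g w) = a * phi_cons p i j m f - b * phi_cons p i j m g"
  unfolding phi_cons_def by (simp add: sum_subtractf sum_distrib_left algebra_simps)

lemma qsym_replicate_snoc_step:
  assumes "\<And>u. qsym p m u (replicate m i) = qfact (p i i) m * u (replicate m i)"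
  shows "qsym p (Suc m) y (replicate m i @ [j]) = qfact (p i i) m * phi_snoc p i j m y"
proof -
  have "qsym p (Suc m) y (replicate m i @ [j]) = (\<Sum>r\<le>m.
      qsym p m (\<lambda>w. (\<Prod>c\<in>{r..<m}. p j (w ! c)) * y (take r w @ j # drop r w)) (replicate m i))"
    by (rule qsym_snoc) simp
  also have "\<dots> = (\<Sum>r\<le>m. qfact (p i i) m * (p j i ^ (m - r) * y (replicate r i @ j # replicate (m - r) i)))"
    by (intro sum.cong refl) (simp add: assms min_def)
  finally show ?thesis by (simp add: phi_snoc_def sum_distrib_left)
qed

lemma qsym_replicate: "qsym p m u (replicate m i) = qfact (p i i) m * u (replicate m i)"
proof (induction m arbitrary: u)
  case 0
  show ?case by (simp add: qsym_def qfact_def)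
next
  case (Suc m)
  have "qsym p (Suc m) u (replicate (Suc m) i) = qsym p (Suc m) u (replicate m i @ [i])"
    by (simp add: replicate_append_same)
  also have "\<dots> = qfact (p i i) m * phi_snoc p i i m u"
    by (rule qsym_replicate_snoc_step[OF Suc.IH])
  also have "phi_snoc p i i m u = (\<Sum>r\<le>m. p i i ^ r) * u (replicate (Suc m) i)"
  proof -
    have "replicate r i @ i # replicate (m - r) i = replicate (Suc m) i" if "r \<le> m" for r
      using that by (simp flip: replicate_Suc replicate_add)
    then show ?thesis
      by (simp add: phi_snoc_def sum_distrib_right sum_power_diff_atMost[symmetric])
  qed
  also have "qfact (p i i) m * ((\<Sum>r\<le>m. p i i ^ r) * u (replicate (Suc m) i))
      = qfact (p i i) (Suc m) * u (replicate (Suc m) i)"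
    by (simp add: qfact_def)
  finally show ?case .
qed

lemma qsym_replicate_snoc:
  "qsym p (Suc m) y (replicate m i @ [j]) = qfact (p i i) m * phi_snoc p i j m y"
  by (rule qsym_replicate_snoc_step[OF qsym_replicate])

lemma qsym_Cons_replicate:
  "qsym p (Suc m) y (j # replicate m i) = qfact (p i i) m * phi_cons p i j m y"
proof -
  have "qsym p (Suc m) y (j # replicate m i)
      = qsym (\<lambda>a b. p b a) (Suc m) (\<lambda>w. y (rev w)) (replicate m i @ [j])"
    using qsym_rev[of "replicate m i @ [j]" "Suc m" p y] by simp
  also have "\<dots> = qfact (p i i) m * phi_snoc (\<lambda>a b. p b a) i j m (\<lambda>w. y (rev w))"
    by (simp add: qsym_replicate_snoc)
  also have "phi_snoc (\<lambda>a b. p b a) i j m (\<lambda>w. y (rev w)) = phi_cons p i j m y"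
    unfolding phi_snoc_def phi_cons_def
    by (rule sum.reindex_bij_witness[where i = "\<lambda>r. m - r" and j = "\<lambda>r. m - r"]) auto
  finally show ?thesis .
qed

lemma qord_one_or_infinity:
  assumes "qord q \<in> {1, \<infinity>}"
  shows "q = 1 \<or> (\<forall>k>0. q ^ k \<noteq> 1)"
proof (cases "\<exists>k>0. q ^ k = 1")
  case True
  then have "(LEAST k. k > 0 \<and> q ^ k = 1) = 1"
    using assms by (auto simp: qord_def one_enat_def)
  then show ?thesis using LeastI_ex[OF True] by simp
qed blast

lemma qfact_nonzero:
  fixes q :: "'a::field_char_0"
  assumes "qord q \<in> {1, \<infinity>}"
  shows "qfact q m \<noteq> 0"
proof -
  have "(\<Sum>r\<le>k. q ^ r) \<noteq> 0" for k
  proof (cases "q = 1")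
    case True
    then show ?thesis by (simp del: of_nat_Suc add: of_nat_neq_0)
  next
    case False
    then have "q ^ Suc k \<noteq> 1" using qord_one_or_infinity[OF assms] by blast
    moreover have "(1 - q) * (\<Sum>r<Suc k. q ^ r) = 1 - q ^ Suc k"
      by (simp only: one_diff_power_eq)
    ultimately show ?thesis by (auto simp: lessThan_Suc_atMost)
  qed
  then show ?thesis by (simp add: qfact_def)
qed

section \<open>Iterated brackets with \<open>x\<^sub>i\<close>\<close>

lemma tmult_tgen_Cons: "tmult (tgen i) y (a # w) = (if a = i then y w else 0)"
proof -
  have "tmult (tgen i) y (a # w) = (\<Sum>k\<le>Suc (length w). if k = 1 then (if a = i then y w else 0) else 0)"
    unfolding tmult_def
  proof (rule sum.cong)
    fix k assume k: "k \<in> {..Suc (length w)}"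
    have "take k (a # w) = [i] \<longleftrightarrow> k = 1 \<and> a = i"
      using k by (cases k) auto
    then show "tgen i (take k (a # w)) * y (drop k (a # w))
        = (if k = 1 then (if a = i then y w else 0) else 0)"
      by (auto simp: tgen_def)
  qed simp
  then show ?thesis by (simp only: sum.delta finite_atMost) simp
qed

lemma tmult_tgen_snoc: "tmult y (tgen i) (w @ [a]) = (if a = i then y w else 0)"
proof -
  have "tmult y (tgen i) (w @ [a]) = (\<Sum>k\<le>Suc (length w). if k = length w then (if a = i then y w else 0) else 0)"
    unfolding tmult_def
  proof (rule sum.cong)
    fix k assume k: "k \<in> {..Suc (length w)}"
    have "drop k (w @ [a]) = [i] \<longleftrightarrow> k = length w \<and> a = i"
    proof (cases "k \<le> length w")
      case True
      then have "length (drop k (w @ [a])) = Suc (length w - k)" by simp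
      then show ?thesis using True by (auto simp: drop_append)
    qed (use k in auto)
    then show "y (take k (w @ [a])) * tgen i (drop k (w @ [a]))
        = (if k = length w then (if a = i then y w else 0) else 0)"
      by (auto simp: tgen_def)
  qed simp
  then show ?thesis by simp
qed

lemma tmult_tgen_right_word:
  assumes "r \<le> m"
  shows "tmult y (tgen i) (replicate r i @ j # replicate (Suc m - r) i)
    = y (replicate r i @ j # replicate (m - r) i)"
proof -
  have "replicate r i @ j # replicate (Suc m - r) i = (replicate r i @ j # replicate (m - r) i) @ [i]"
    using assms by (simp add: Suc_diff_le replicate_append_same)
  then show ?thesis
    using tmult_tgen_snoc[of y i "replicate r i @ j # replicate (m - r) i" i] by simp
qed

lemma phi_snoc_tmult_tgen_left:
  assumes "i \<noteq> j"
  shows "phi_snoc p i j (Suc m) (tmult (tgen i) y) = phi_snoc p i j m y"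
  unfolding phi_snoc_def using assms
  by (subst sum.atMost_Suc_shift) (simp add: tmult_tgen_Cons)

lemma phi_cons_tmult_tgen_left:
  assumes "i \<noteq> j"
  shows "phi_cons p i j (Suc m) (tmult (tgen i) y) = p i j * phi_cons p i j m y"
  unfolding phi_cons_def using assms
  by (subst sum.atMost_Suc_shift) (simp add: tmult_tgen_Cons sum_distrib_left mult.assoc)

lemma phi_snoc_tmult_tgen_right:
  assumes "i \<noteq> j"
  shows "phi_snoc p i j (Suc m) (tmult y (tgen i)) = p j i * phi_snoc p i j m y"
proof -
  have "phi_snoc p i j (Suc m) (tmult y (tgen i)) = (\<Sum>r\<le>m.
      p j i ^ (Suc m - r) * tmult y (tgen i) (replicate r i @ j # replicate (Suc m - r) i))"
    using assms tmult_tgen_snoc[of y i "replicate (Suc m) i" j]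
    by (simp add: phi_snoc_def sum.atMost_Suc)
  also have "\<dots> = (\<Sum>r\<le>m. p j i * (p j i ^ (m - r) * y (replicate r i @ j # replicate (m - r) i)))"
  proof (rule sum.cong)
    fix r assume "r \<in> {..m}"
    then have "r \<le> m" by simp
    then show "p j i ^ (Suc m - r) * tmult y (tgen i) (replicate r i @ j # replicate (Suc m - r) i)
        = p j i * (p j i ^ (m - r) * y (replicate r i @ j # replicate (m - r) i))"
      unfolding tmult_tgen_right_word[OF \<open>r \<le> m\<close>] by (simp add: Suc_diff_le)
  qed simp
  finally show ?thesis by (simp add: phi_snoc_def sum_distrib_left)
qed

lemma phi_cons_tmult_tgen_right:
  assumes "i \<noteq> j"
  shows "phi_cons p i j (Suc m) (tmult y (tgen i)) = phi_cons p i j m y"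
proof -
  have "phi_cons p i j (Suc m) (tmult y (tgen i)) = (\<Sum>r\<le>m.
      p i j ^ r * tmult y (tgen i) (replicate r i @ j # replicate (Suc m - r) i))"
    using assms tmult_tgen_snoc[of y i "replicate (Suc m) i" j]
    by (simp add: phi_cons_def sum.atMost_Suc)
  also have "\<dots> = phi_cons p i j m y"
    unfolding phi_cons_def by (rule sum.cong) (simp_all add: tmult_tgen_right_word)
  finally show ?thesis .
qed

definition deg_gen :: "nat \<Rightarrow> nat \<Rightarrow> nat" where
  "deg_gen i = (\<lambda>k. if k = i then 1 else 0)"

definition deg_ad :: "nat \<Rightarrow> nat \<Rightarrow> nat \<Rightarrow> nat \<Rightarrow> nat" where
  "deg_ad i j m = (\<lambda>k. (if k = i then m else 0) + (if k = j then 1 else 0))"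

lemma bichar_deg_gen_left:
  assumes "i < n"
  shows "bichar n p (deg_gen i) e = (\<Prod>b<n. p i b ^ e b)"
proof -
  have "bichar n p (deg_gen i) e = (\<Prod>a<n. if a = i then (\<Prod>b<n. p i b ^ e b) else 1)"
    unfolding bichar_def by (rule prod.cong) (auto simp: deg_gen_def)
  then show ?thesis using assms by (simp add: prod.delta)
qed

lemma bichar_deg_gen_right:
  assumes "i < n"
  shows "bichar n p d (deg_gen i) = (\<Prod>a<n. p a i ^ d a)"
proof -
  have "(\<Prod>b<n. p a b ^ (d a * deg_gen i b)) = (\<Prod>b<n. if b = i then p a i ^ d a else 1)" for a
    by (rule prod.cong) (auto simp: deg_gen_def)
  then show ?thesis using assms by (simp add: bichar_def prod.delta)
qed

lemma prod_power_deg_ad: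
  assumes "i < n" "j < n" "i \<noteq> j"
  shows "(\<Prod>b<n. f b ^ deg_ad i j m b) = f i ^ m * f j"
proof -
  have "(\<Prod>b<n. f b ^ deg_ad i j m b) = (\<Prod>b<n. (if b = i then f i ^ m else 1) * (if b = j then f j else 1))"
    by (rule prod.cong) (auto simp: deg_ad_def power_add)
  also have "\<dots> = f i ^ m * f j" using assms by (simp add: prod.distrib prod.delta)
  finally show ?thesis .
qed

primrec ad_iter :: "((nat \<Rightarrow> nat) \<Rightarrow> (nat \<Rightarrow> nat) \<Rightarrow> 'a tens \<Rightarrow> 'a tens \<Rightarrow> 'a tens)
    \<Rightarrow> nat \<Rightarrow> nat \<Rightarrow> nat \<Rightarrow> 'a::{zero,one} tens" where
  "ad_iter br i j 0 = tgen j"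
| "ad_iter br i j (Suc m) = br (deg_gen i) (deg_ad i j m) (tgen i) (ad_iter br i j m)"

lemma ad_iter_lie_gen:
  assumes "i < n" "j < n"
  shows "(ad_iter br i j m, deg_ad i j m) \<in> lie_gen n br"
proof (induction m)
  case 0
  have "deg_ad i j 0 = (\<lambda>k. if k = j then 1 else 0)" by (auto simp: deg_ad_def)
  then show ?case using lie_gen.gen[OF assms(2), of br] by simp
next
  case (Suc m)
  have "deg_ad i j (Suc m) = (\<lambda>k. deg_gen i k + deg_ad i j m k)"
    by (auto simp: deg_ad_def deg_gen_def)
  then show ?case
    using lie_gen.bra[OF lie_gen.gen[OF assms(1)] Suc] by (simp add: deg_gen_def)
qed

context
  fixes n i j :: nat and p :: "nat \<Rightarrow> nat \<Rightarrow> 'a::comm_ring_1"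
  assumes ij: "i < n" "j < n" "i \<noteq> j"
begin

lemma bichar_deg_gen_deg_ad: "bichar n p (deg_gen i) (deg_ad i j m) = p i i ^ m * p i j"
  using ij by (simp add: bichar_deg_gen_left prod_power_deg_ad)

lemma bichar_deg_ad_deg_gen: "bichar n p (deg_ad i j m) (deg_gen i) = p i i ^ m * p j i"
  using ij by (simp add: bichar_deg_gen_right prod_power_deg_ad)

lemma phi_snoc_brR:
  "phi_snoc p i j (Suc m) (brR n p (deg_gen i) (deg_ad i j m) (tgen i) y)
    = p i i ^ m * (p i j - p j i ^ 2) * phi_snoc p i j m y"
  using ij unfolding brR_def phi_snoc_lincomb
  by (simp add: bichar_deg_gen_deg_ad bichar_deg_ad_deg_gen phi_snoc_tmult_tgen_left
      phi_snoc_tmult_tgen_right power2_eq_square algebra_simps)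

lemma phi_cons_brR:
  "phi_cons p i j (Suc m) (brR n p (deg_gen i) (deg_ad i j m) (tgen i) y)
    = p i i ^ m * (p i j ^ 2 - p j i) * phi_cons p i j m y"
  using ij unfolding brR_def phi_cons_lincomb
  by (simp add: bichar_deg_gen_deg_ad bichar_deg_ad_deg_gen phi_cons_tmult_tgen_left
      phi_cons_tmult_tgen_right power2_eq_square algebra_simps)

lemma phi_snoc_brL:
  "phi_snoc p i j (Suc m) (brL n p (deg_gen i) (deg_ad i j m) (tgen i) y)
    = p i i ^ m * p j i * (1 - p i j) * phi_snoc p i j m y"
  using ij unfolding brL_def phi_snoc_lincomb
  by (simp add: bichar_deg_gen_deg_ad bichar_deg_ad_deg_gen phi_snoc_tmult_tgen_left
      phi_snoc_tmult_tgen_right algebra_simps)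

lemma phi_cons_brL:
  "phi_cons p i j (Suc m) (brL n p (deg_gen i) (deg_ad i j m) (tgen i) y)
    = p i i ^ m * p i j * (p j i - 1) * phi_cons p i j m y"
  using ij unfolding brL_def phi_cons_lincomb
  by (simp add: bichar_deg_gen_deg_ad bichar_deg_ad_deg_gen phi_cons_tmult_tgen_left
      phi_cons_tmult_tgen_right algebra_simps)

end

lemma nichols_infdim_ad_iter:
  fixes p :: "nat \<Rightarrow> nat \<Rightarrow> 'a::field_char_0" and \<phi> :: "nat \<Rightarrow> 'a tens \<Rightarrow> 'a"
  assumes "i < n" "j < n" and "qord (p i i) \<in> {1, \<infinity>}"
    and qsym_\<phi>: "\<And>m y. qsym p (Suc m) y (w m) = qfact (p i i) m * \<phi> m y"
    and "\<phi> 0 (tgen j) \<noteq> 0"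
    and \<phi>_br: "\<And>m y. \<phi> (Suc m) (br (deg_gen i) (deg_ad i j m) (tgen i) y) = k m * \<phi> m y"
    and "\<And>m. k m \<noteq> 0"
  shows "nichols_infdim n p (tspan (fst ` lie_gen n br))"
proof (rule nichols_infdimI)
  fix N
  have "\<phi> m (ad_iter br i j m) \<noteq> 0" for m
    by (induction m) (use assms in \<open>simp_all add: \<phi>_br\<close>)
  then have "qsym p (Suc N) (ad_iter br i j N) (w N) \<noteq> 0"
    using qfact_nonzero[OF assms(3)] by (simp add: qsym_\<phi>)
  moreover have "ad_iter br i j N \<in> tspan (fst ` lie_gen n br)"
    using ad_iter_lie_gen[OF assms(1,2)] by (intro module.span_base[OF module_tscale]) force
  ultimately show "\<exists>u\<in>tspan (fst ` lie_gen n br). \<exists>m>N. \<exists>v. qsym p m u v \<noteq> 0"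
    by blast
qed

lemma nichols_infdim_lieR:
  fixes p :: "nat \<Rightarrow> nat \<Rightarrow> 'a::field_char_0"
  assumes ij: "i < n" "j < n" "i \<noteq> j" and "p i i \<noteq> 0" and q: "qord (p i i) \<in> {1, \<infinity>}"
    and "p i j \<noteq> (p j i)^2 \<or> p j i \<noteq> (p i j)^2"
  shows "nichols_infdim n p (lieR n p)"
  using assms(6) unfolding lieR_def
proof
  assume ne: "p i j \<noteq> (p j i)^2"
  show "nichols_infdim n p (tspan (fst ` lie_gen n (brR n p)))"
    by (rule nichols_infdim_ad_iter[OF ij(1,2) q qsym_replicate_snoc[where p = p and j = j],
          where k = "\<lambda>m. p i i ^ m * (p i j - p j i ^ 2)"])
      (use ne \<open>p i i \<noteq> 0\<close> in \<open>simp_all add: phi_snoc_tgen phi_snoc_brR[OF ij]\<close>)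
next
  assume ne: "p j i \<noteq> (p i j)^2"
  show "nichols_infdim n p (tspan (fst ` lie_gen n (brR n p)))"
    by (rule nichols_infdim_ad_iter[OF ij(1,2) q qsym_Cons_replicate[where p = p and j = j],
          where k = "\<lambda>m. p i i ^ m * (p i j ^ 2 - p j i)"])
      (use ne \<open>p i i \<noteq> 0\<close> in \<open>simp_all add: phi_cons_tgen phi_cons_brR[OF ij]\<close>)
qed

lemma nichols_infdim_lieL:
  fixes p :: "nat \<Rightarrow> nat \<Rightarrow> 'a::field_char_0"
  assumes ij: "i < n" "j < n" "i \<noteq> j" and "p i i \<noteq> 0" "p i j \<noteq> 0" "p j i \<noteq> 0"
    and q: "qord (p i i) \<in> {1, \<infinity>}" and "p i j \<noteq> 1 \<or> p j i \<noteq> 1"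
  shows "nichols_infdim n p (lieL n p)"
  using assms(8) unfolding lieL_def
proof
  assume ne: "p i j \<noteq> 1"
  show "nichols_infdim n p (tspan (fst ` lie_gen n (brL n p)))"
    by (rule nichols_infdim_ad_iter[OF ij(1,2) q qsym_replicate_snoc[where p = p and j = j],
          where k = "\<lambda>m. p i i ^ m * p j i * (1 - p i j)"])
      (use ne \<open>p i i \<noteq> 0\<close> \<open>p j i \<noteq> 0\<close> in \<open>simp_all add: phi_snoc_tgen phi_snoc_brL[OF ij]\<close>)
next
  assume ne: "p j i \<noteq> 1"
  show "nichols_infdim n p (tspan (fst ` lie_gen n (brL n p)))"
    by (rule nichols_infdim_ad_iter[OF ij(1,2) q qsym_Cons_replicate[where p = p and j = j],
          where k = "\<lambda>m. p i i ^ m * p i j * (p j i - 1)"])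
      (use ne \<open>p i i \<noteq> 0\<close> \<open>p i j \<noteq> 0\<close> in \<open>simp_all add: phi_cons_tgen phi_cons_brL[OF ij]\<close>)
qed

theorem proposition6p8:
  fixes n :: nat and p :: "nat \<Rightarrow> nat \<Rightarrow> 'a::field_char_0"
  assumes "\<forall>i<n. \<forall>j<n. p i j \<noteq> 0"
  shows "((\<exists>i<n. \<exists>j<n. i \<noteq> j \<and> (p i j \<noteq> (p j i)^2 \<or> p j i \<noteq> (p i j)^2)
            \<and> qord (p i i) \<in> {1, \<infinity>}) \<longrightarrow> nichols_infdim n p (lieR n p))
       \<and> ((\<exists>i<n. \<exists>j<n. i \<noteq> j \<and> (p i j \<noteq> 1 \<or> p j i \<noteq> 1)
            \<and> qord (p i i) \<in> {1, \<infinity>}) \<longrightarrow> nichols_infdim n p (lieL n p))"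
proof (intro conjI impI)
  assume "\<exists>i<n. \<exists>j<n. i \<noteq> j \<and> (p i j \<noteq> (p j i)^2 \<or> p j i \<noteq> (p i j)^2)
    \<and> qord (p i i) \<in> {1, \<infinity>}"
  then obtain i j where ij: "i < n" "j < n" "i \<noteq> j"
    and ne: "p i j \<noteq> (p j i)^2 \<or> p j i \<noteq> (p i j)^2" and q: "qord (p i i) \<in> {1, \<infinity>}"
    by blast
  show "nichols_infdim n p (lieR n p)"
    by (rule nichols_infdim_lieR[OF ij _ q ne]) (use assms ij in blast)
next
  assume "\<exists>i<n. \<exists>j<n. i \<noteq> j \<and> (p i j \<noteq> 1 \<or> p j i \<noteq> 1) \<and> qord (p i i) \<in> {1, \<infinity>}"
  then obtain i j where ij: "i < n" "j < n" "i \<noteq> j"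
    and ne: "p i j \<noteq> 1 \<or> p j i \<noteq> 1" and q: "qord (p i i) \<in> {1, \<infinity>}"
    by blast
  show "nichols_infdim n p (lieL n p)"
    by (rule nichols_infdim_lieL[OF ij _ _ _ q ne]) (use assms ij in blast)+
qed

end
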